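(* Let $0<\nu<1$ and let $R,S,T,U>0$ satisfy \[ S=\frac{18}{-\nu^2+\nu+2}-R,\quad T=\tfrac{1}{18}\big(9-(\nu+1)R((\nu-2)R+6)\big),\quad U=\tfrac{1}{18}\Big(-(\nu-2)(\nu+1)R^2-6(\nu+4)R+\frac{9(\nu-14)}{\nu-2}\Big). \] For $\theta\in\mathbb{R}$ let \[ A(\theta)=\begin{pmatrix} 1-\nu\big(1+(1-\nu)(U-T)\big)(1-e^{-I\theta}) & \nu(1-\nu)(Ue^{-I\theta}-T)(1-e^{-I\theta})\\ \nu(1-\nu)(R+S) & (1-\nu)(1-\nu R)+\nu\big(1-(1-\nu)S\big)e^{-I\theta} \end{pmatrix}, \] where $I$ is the imaginary unit, and let $\lambda_1(\theta)$ be the eigenvalue of $A(\theta)$ depending analytically on $\theta$ near $0$ with $\lambda_1(0)=1$. Then \[ \lambda_1(\theta)-e^{-I\nu\theta}=\frac{1}{540}\,I\,\nu\,(2\nu^4-5\nu^3+5\nu-2)\,\theta^5+O(\theta^6)\quad(\theta\to0). \]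
   Context: $A(\theta)$ is the amplification matrix, acting on Fourier amplitudes $(\hat Q,\hat q)$ of cell averages and interface point values, of the following parameterized Active Flux scheme for $q_t+aq_x=0$, $a>0$, on a uniform grid with cells $[x_{i-1/2},x_{i+1/2}]$ of width $\Delta x$ and Courant number $\nu=a\Delta t/\Delta x$: $q^{n+1}_{i+1/2}=(1-\nu)q^n_{i+1/2}+\nu q^n_{i-1/2}-\nu(1-\nu)\big(R(q^n_{i+1/2}-Q^n_i)-S(Q^n_i-q^n_{i-1/2})\big)$, $\bar q_{i+1/2}=Q^n_i+(1-\nu)\big(T(q^n_{i+1/2}-Q^n_i)+U(Q^n_i-q^n_{i-1/2})\big)$, $Q^{n+1}_i=Q^n_i-\nu(\bar q_{i+1/2}-\bar q_{i-1/2})$. The exact amplification factor is $e^{-I\nu\theta}$. At $\theta=0$ the two eigenvalues of $A$ are $1$ and $1-\nu(1-\nu)(R+S)\neq1$, so $\lambda_1$ is well defined near $\theta=0$. *)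

theory Defs
  imports "HOL-Analysis.Analysis" "HOL-Library.Landau_Symbols"
begin

definition AF_matrix :: "real \<Rightarrow> real \<Rightarrow> real \<Rightarrow> real \<Rightarrow> real \<Rightarrow> real \<Rightarrow> complex^2^2" where
  "AF_matrix \<nu> R S T U \<theta> =
     (let z = exp (- \<i> * complex_of_real \<theta>);
          n = complex_of_real \<nu>; r = complex_of_real R; s = complex_of_real S;
          t = complex_of_real T; u = complex_of_real U in
     vector [
       vector [1 - n * (1 + (1 - n) * (u - t)) * (1 - z),
               n * (1 - n) * (u * z - t) * (1 - z)],
       vector [n * (1 - n) * (r + s),
               (1 - n) * (1 - n * r) + n * (1 - (1 - n) * s) * z]])"

definition is_eigenvalue :: "complex^'n^'n \<Rightarrow> complex \<Rightarrow> bool" where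
  "is_eigenvalue M \<mu> \<longleftrightarrow> (\<exists>v. v \<noteq> 0 \<and> M *v v = \<mu> *s v)"

end

theory Submission
  imports Defs "HOL-Computational_Algebra.Polynomial"
begin

(* Write p(z, mu) = det (A - mu I) with e^(-i theta) replaced by z, so that p(z, lambda1) = 0, and put
   y = -i theta, z = e^y and E = e^(nu y) - c y^5 with c = nu (2 nu^4 - 5 nu^3 + 5 nu - 2) / 540, the
   claimed expansion of lambda1.  Replacing both exponentials by their Taylor polynomials of degree 5
   changes p(z, E) by O(y^6), and for the parameters of the theorem the resulting polynomial in y is
   divisible by y^6.  Hence p(z, E) = (E - lambda1) (E - lambda2) = O(theta^6), where the second
   eigenvalue lambda2 = tr A - lambda1 stays away from 1: E - lambda2 tends to nu (1 - nu) (R + S) > 0. *)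

lemma is_eigenvalue_imp_det_eq_0:
  fixes M :: "complex^'n^'n"
  assumes "is_eigenvalue M \<mu>"
  shows "det (M - mat \<mu>) = 0"
proof -
  obtain v where "v \<noteq> 0" and "M *v v = \<mu> *s v"
    using assms unfolding is_eigenvalue_def by blast
  moreover have "mat \<mu> *v v = \<mu> *s v"
    by (simp add: vec_eq_iff matrix_vector_mult_def mat_def if_distrib[of "\<lambda>a. a * _"] sum.delta
        cong: if_cong)
  ultimately have "(M - mat \<mu>) *v v = 0"
    by (simp add: matrix_vector_mult_diff_rdistrib)
  with \<open>v \<noteq> 0\<close> have "\<not> invertible (M - mat \<mu>)"
    by (auto simp: invertible_left_inverse matrix_left_invertible_ker)
  then show ?thesis
    by (simp add: invertible_det_nz)
qed

lemma is_eigenvalue_2x2_char_eq: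
  fixes M :: "complex^2^2"
  assumes "is_eigenvalue M \<mu>"
  shows "(M$1$1 - \<mu>) * (M$2$2 - \<mu>) - M$1$2 * M$2$1 = 0"
  using is_eigenvalue_imp_det_eq_0[OF assms] by (simp add: det_2 mat_def)

(* Stated over any commutative ring, so that polynomials can be substituted for z and mu. *)
definition AF_charpoly :: "'a::comm_ring_1 \<Rightarrow> 'a \<Rightarrow> 'a \<Rightarrow> 'a \<Rightarrow> 'a \<Rightarrow> 'a \<Rightarrow> 'a \<Rightarrow> 'a" where
  "AF_charpoly n r s t u z \<mu> =
     (1 - n * (1 + (1 - n) * (u - t)) * (1 - z) - \<mu>) * ((1 - n) * (1 - n * r) + n * (1 - (1 - n) * s) * z - \<mu>)
     - n * (1 - n) * (u * z - t) * (1 - z) * (n * (1 - n) * (r + s))"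

definition AF_trace :: "'a::comm_ring_1 \<Rightarrow> 'a \<Rightarrow> 'a \<Rightarrow> 'a \<Rightarrow> 'a \<Rightarrow> 'a \<Rightarrow> 'a" where
  "AF_trace n r s t u z =
     1 - n * (1 + (1 - n) * (u - t)) * (1 - z) + ((1 - n) * (1 - n * r) + n * (1 - (1 - n) * s) * z)"

lemma AF_charpoly_eigenvalue_eq_0:
  assumes "is_eigenvalue (AF_matrix \<nu> R S T U \<theta>) \<mu>"
  shows "AF_charpoly (of_real \<nu>) (of_real R) (of_real S) (of_real T) (of_real U)
           (exp (- \<i> * of_real \<theta>)) \<mu> = 0"
  using is_eigenvalue_2x2_char_eq[OF assms] by (simp add: AF_matrix_def AF_charpoly_def Let_def)

lemma AF_charpoly_diff_factor:
  "AF_charpoly n r s t u z \<mu> - AF_charpoly n r s t u z \<mu>' = (\<mu> - \<mu>') * (\<mu> + \<mu>' - AF_trace n r s t u z)"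
  unfolding AF_charpoly_def AF_trace_def by (simp add: algebra_simps)

lemma AF_trace_1: "AF_trace n r s t u 1 = 2 - n * (1 - n) * (r + s)"
  unfolding AF_trace_def by (simp add: algebra_simps)

lemma poly_AF_charpoly:
  "poly (AF_charpoly [:n:] [:r:] [:s:] [:t:] [:u:] p q) y = AF_charpoly n r s t u (poly p y) (poly q y)"
  by (simp add: AF_charpoly_def algebra_simps)

definition exp_taylor :: "'a::field_char_0 \<Rightarrow> nat \<Rightarrow> 'a poly" where
  "exp_taylor c m = (\<Sum>k\<le>m. monom (c ^ k / fact k) k)"

lemma coeff_exp_taylor: "coeff (exp_taylor c m) k = (if k \<le> m then c ^ k / fact k else 0)"
  by (simp add: exp_taylor_def coeff_sum)

lemma poly_exp_taylor: "poly (exp_taylor c m) y = (\<Sum>k\<le>m. (c * y) ^ k / fact k)"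
  by (simp add: exp_taylor_def poly_sum poly_monom power_mult_distrib)

(* The hypotheses are the formulas for S, T and U of the theorem with the denominators cleared;
   in particular U - T = 6 / (2 - nu) - R. *)
lemma AF_order_conditions:
  fixes n r s t u :: "'a::field_char_0"
  assumes "(r + s) * ((2 - n) * (n + 1)) = 18"
    and "(u - t + r) * (2 - n) = 6"
    and "18 * t = 9 - (n + 1) * r * ((n - 2) * r + 6)"
  shows "monom 1 6 dvd AF_charpoly [:n:] [:r:] [:s:] [:t:] [:u:] (exp_taylor 1 5)
          (exp_taylor n 5 - monom (n * (2*n^4 - 5*n^3 + 5*n - 2) / 540) 5)"
proof -
  have nz: "2 - n \<noteq> 0" "n + 1 \<noteq> 0"
    using assms(1) by auto
  show ?thesis
    unfolding monom_1_dvd_iff' AF_charpoly_def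
    by (simp add: All_less_Suc eval_nat_numeral coeff_mult coeff_exp_taylor;
        intro conjI; simp add: field_simps; use nz assms in algebra)
qed

lemma bigo_mult_tendsto:
  fixes f h :: "'a \<Rightarrow> 'b::real_normed_field"
  assumes "f \<in> O[F](g)" and "(h \<longlongrightarrow> c) F"
  shows "(\<lambda>x. f x * h x) \<in> O[F](g)"
proof -
  have "h \<in> O[F](\<lambda>_. 1)"
    using assms(2) by (intro bigoI_tendsto[where c = c]) simp_all
  from landau_o.big.mult[OF assms(1) this] show ?thesis
    by simp
qed

lemma bigo_divide_tendsto:
  fixes f h :: "'a \<Rightarrow> 'b::real_normed_field"
  assumes "f \<in> O[F](g)" and "(h \<longlongrightarrow> c) F" and "c \<noteq> 0"
  shows "(\<lambda>x. f x / h x) \<in> O[F](g)"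
  using bigo_mult_tendsto[OF assms(1) tendsto_inverse[OF assms(2,3)]]
  by (simp add: divide_inverse)

lemma exp_taylor_remainder_bigo:
  fixes c :: "'a::{real_normed_field,banach}"
  assumes "(f \<longlongrightarrow> 0) F"
  shows "(\<lambda>x. exp (c * f x) - poly (exp_taylor c m) (f x)) \<in> O[F](\<lambda>x. f x ^ Suc m)"
proof (rule bigoI)
  have "eventually (\<lambda>x. norm (f x) < 1) F"
    using assms by (rule order_tendstoD(2)[OF tendsto_norm_zero]) simp
  then show "eventually (\<lambda>x. norm (exp (c * f x) - poly (exp_taylor c m) (f x))
      \<le> exp (norm c) * (norm c ^ Suc m / fact m) * norm (f x ^ Suc m)) F"
  proof eventually_elim
    case (elim x)
    have "norm (exp (c * f x) - poly (exp_taylor c m) (f x))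
        \<le> exp (norm (c * f x)) * norm (c * f x) ^ Suc m / fact m"
      unfolding poly_exp_taylor by (rule Taylor_exp_field)
    also have "\<dots> = exp (norm (c * f x)) * (norm c ^ Suc m / fact m) * norm (f x ^ Suc m)"
      by (simp add: norm_mult norm_power power_mult_distrib)
    also have "\<dots> \<le> exp (norm c) * (norm c ^ Suc m / fact m) * norm (f x ^ Suc m)"
      using elim by (intro mult_right_mono) (auto simp: norm_mult mult_left_le)
    finally show ?case .
  qed
qed

lemma AF_charpoly_bigo_cong:
  fixes z z' \<mu> \<mu>' :: "'a \<Rightarrow> 'b::real_normed_field"
  assumes "(\<lambda>x. z x - z' x) \<in> O[F](g)" and "(\<lambda>x. \<mu> x - \<mu>' x) \<in> O[F](g)"
    and "(z \<longlongrightarrow> a) F" "(z' \<longlongrightarrow> a') F" "(\<mu> \<longlongrightarrow> b) F" "(\<mu>' \<longlongrightarrow> b') F"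
  shows "(\<lambda>x. AF_charpoly n r s t u (z x) (\<mu> x) - AF_charpoly n r s t u (z' x) (\<mu>' x)) \<in> O[F](g)"
proof -
  define slope where "slope w w' m =
      n * (1 + (1 - n) * (u - t)) * ((1 - n) * (1 - n * r) + n * (1 - (1 - n) * s) * w - m)
    + n * (1 - (1 - n) * s) * (1 - n * (1 + (1 - n) * (u - t)) * (1 - w') - m)
    - n * (1 - n) * (u + t - u * (w + w')) * (n * (1 - n) * (r + s))" for w w' m
  have "AF_charpoly n r s t u (z x) (\<mu> x) - AF_charpoly n r s t u (z' x) (\<mu>' x)
      = (\<mu> x - \<mu>' x) * (\<mu> x + \<mu>' x - AF_trace n r s t u (z x)) + (z x - z' x) * slope (z x) (z' x) (\<mu>' x)" for x
    unfolding slope_def AF_charpoly_def AF_trace_def by algebra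
  moreover have "((\<lambda>x. \<mu> x + \<mu>' x - AF_trace n r s t u (z x)) \<longlongrightarrow> b + b' - AF_trace n r s t u a) F"
    unfolding AF_trace_def by (intro tendsto_intros assms(3-6))
  then have "(\<lambda>x. (\<mu> x - \<mu>' x) * (\<mu> x + \<mu>' x - AF_trace n r s t u (z x))) \<in> O[F](g)"
    by (rule bigo_mult_tendsto[OF assms(2)])
  moreover have "((\<lambda>x. slope (z x) (z' x) (\<mu>' x)) \<longlongrightarrow> slope a a' b') F"
    unfolding slope_def by (intro tendsto_intros assms(3-6))
  then have "(\<lambda>x. (z x - z' x) * slope (z x) (z' x) (\<mu>' x)) \<in> O[F](g)"
    by (rule bigo_mult_tendsto[OF assms(1)])
  ultimately show ?thesis
    by (simp add: sum_in_bigo)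
qed

lemma AF_charpoly_exp_bigo:
  fixes n r s t u :: "'a::{real_normed_field,banach}"
  assumes "(r + s) * ((2 - n) * (n + 1)) = 18"
    and "(u - t + r) * (2 - n) = 6"
    and "18 * t = 9 - (n + 1) * r * ((n - 2) * r + 6)"
    and "(f \<longlongrightarrow> 0) F"
  shows "(\<lambda>x. AF_charpoly n r s t u (exp (f x))
            (exp (n * f x) - n * (2*n^4 - 5*n^3 + 5*n - 2) / 540 * f x ^ 5))
         \<in> O[F](\<lambda>x. f x ^ 6)"
proof -
  define c where "c = n * (2*n^4 - 5*n^3 + 5*n - 2) / 540"
  define Z where "Z = exp_taylor (1::'a) 5"
  define E where "E = exp_taylor n 5 - monom c 5"
  obtain h where h: "AF_charpoly [:n:] [:r:] [:s:] [:t:] [:u:] Z E = monom 1 6 * h"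
    using AF_order_conditions[OF assms(1-3)] unfolding Z_def E_def c_def by (elim dvdE)
  define p where "p x = AF_charpoly n r s t u (exp (f x)) (exp (n * f x) - c * f x ^ 5)" for x
  define p\<^sub>0 where "p\<^sub>0 x = AF_charpoly n r s t u (poly Z (f x)) (poly E (f x))" for x
  have remainder: "(\<lambda>x. p x - p\<^sub>0 x) \<in> O[F](\<lambda>x. f x ^ 6)"
    unfolding p_def p\<^sub>0_def
  proof (rule AF_charpoly_bigo_cong)
    show "(\<lambda>x. exp (f x) - poly Z (f x)) \<in> O[F](\<lambda>x. f x ^ 6)"
      using exp_taylor_remainder_bigo[OF assms(4), of 1 5] by (simp add: Z_def)
    show "(\<lambda>x. (exp (n * f x) - c * f x ^ 5) - poly E (f x)) \<in> O[F](\<lambda>x. f x ^ 6)"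
      using exp_taylor_remainder_bigo[OF assms(4), of n 5] by (simp add: E_def poly_monom)
    show "((\<lambda>x. exp (f x)) \<longlongrightarrow> exp 0) F" "((\<lambda>x. poly Z (f x)) \<longlongrightarrow> poly Z 0) F"
      "((\<lambda>x. exp (n * f x) - c * f x ^ 5) \<longlongrightarrow> exp (n * 0) - c * 0 ^ 5) F"
      "((\<lambda>x. poly E (f x)) \<longlongrightarrow> poly E 0) F"
      by (intro tendsto_intros assms(4))+
  qed
  have "p\<^sub>0 = (\<lambda>x. f x ^ 6 * poly h (f x))"
    unfolding p\<^sub>0_def by (simp add: fun_eq_iff poly_AF_charpoly[symmetric] h poly_monom)
  then have "p\<^sub>0 \<in> O[F](\<lambda>x. f x ^ 6)"
    by (simp add: bigo_mult_tendsto[OF landau_o.big_refl tendsto_poly[OF assms(4)]])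
  with remainder have "(\<lambda>x. (p x - p\<^sub>0 x) + p\<^sub>0 x) \<in> O[F](\<lambda>x. f x ^ 6)"
    by (rule sum_in_bigo(1))
  then show ?thesis
    by (simp add: p_def c_def)
qed

(* The root 1 of p(1, -) is simple: the other root is 1 - n (1 - n) (r + s). *)
lemma AF_charpoly_root_bigo:
  fixes z \<mu> lam :: "'a \<Rightarrow> 'b::real_normed_field"
  assumes "eventually (\<lambda>x. AF_charpoly n r s t u (z x) (lam x) = 0) F"
    and "(\<lambda>x. AF_charpoly n r s t u (z x) (\<mu> x)) \<in> O[F](g)"
    and "(z \<longlongrightarrow> 1) F" "(\<mu> \<longlongrightarrow> 1) F" "(lam \<longlongrightarrow> 1) F"
    and "n * (1 - n) * (r + s) \<noteq> 0"
  shows "(\<lambda>x. \<mu> x - lam x) \<in> O[F](g)"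
proof -
  define G where "G x = \<mu> x + lam x - AF_trace n r s t u (z x)" for x
  have "(G \<longlongrightarrow> 1 + 1 - AF_trace n r s t u 1) F"
    unfolding G_def AF_trace_def by (intro tendsto_add tendsto_diff tendsto_mult tendsto_const assms(3-5))
  then have G_lim: "(G \<longlongrightarrow> n * (1 - n) * (r + s)) F"
    by (simp add: AF_trace_1)
  have quotient_eq: "eventually (\<lambda>x. AF_charpoly n r s t u (z x) (\<mu> x) / G x = \<mu> x - lam x) F"
    using assms(1) tendsto_imp_eventually_ne[OF G_lim assms(6)]
  proof eventually_elim
    case (elim x)
    then show ?case
      using AF_charpoly_diff_factor[of n r s t u "z x" "\<mu> x" "lam x"] by (simp add: G_def field_simps)
  qed
  from bigo_divide_tendsto[OF assms(2) G_lim assms(6)] show ?thesis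
    by (rule landau_o.big.in_cong[OF quotient_eq, THEN iffD1])
qed

lemma AF_parameter_conditions:
  fixes \<nu> R S T U :: real
  assumes "\<nu> \<noteq> -1" "\<nu> \<noteq> 2"
    and "S = 18 / (- (\<nu> ^ 2) + \<nu> + 2) - R"
    and "T = (9 - (\<nu> + 1) * R * ((\<nu> - 2) * R + 6)) / 18"
    and "U = (- (\<nu> - 2) * (\<nu> + 1) * R ^ 2 - 6 * (\<nu> + 4) * R + 9 * (\<nu> - 14) / (\<nu> - 2)) / 18"
  shows "(R + S) * ((2 - \<nu>) * (\<nu> + 1)) = 18" "(U - T + R) * (2 - \<nu>) = 6"
    "18 * T = 9 - (\<nu> + 1) * R * ((\<nu> - 2) * R + 6)"
proof -
  have "- (\<nu> ^ 2) + \<nu> + 2 = (2 - \<nu>) * (\<nu> + 1)"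
    by (simp add: algebra_simps power2_eq_square)
  moreover have "(2 - \<nu>) * (\<nu> + 1) \<noteq> 0" "\<nu> - 2 \<noteq> 0"
    using assms(1,2) by (simp_all add: add_eq_0_iff2)
  ultimately show "(R + S) * ((2 - \<nu>) * (\<nu> + 1)) = 18" "(U - T + R) * (2 - \<nu>) = 6"
    "18 * T = 9 - (\<nu> + 1) * R * ((\<nu> - 2) * R + 6)"
    unfolding assms(3-5) by (simp_all add: field_simps) (simp add: algebra_simps power2_eq_square)
qed

lemma AF_charpoly_exp_i_bigo:
  fixes \<nu> R S T U :: real
  assumes "(R + S) * ((2 - \<nu>) * (\<nu> + 1)) = 18" "(U - T + R) * (2 - \<nu>) = 6"
    and "18 * T = 9 - (\<nu> + 1) * R * ((\<nu> - 2) * R + 6)"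
  shows "(\<lambda>\<theta>. AF_charpoly (of_real \<nu>) (of_real R) (of_real S) (of_real T) (of_real U)
            (exp (- \<i> * of_real \<theta>))
            (exp (- \<i> * of_real (\<nu> * \<theta>))
             + (1/540) * \<i> * of_real (\<nu> * (2*\<nu> ^ 4 - 5*\<nu> ^ 3 + 5*\<nu> - 2)) * of_real \<theta> ^ 5))
         \<in> O[at 0](\<lambda>\<theta>. complex_of_real \<theta> ^ 6)"
proof -
  have "((\<lambda>\<theta>. - \<i> * complex_of_real \<theta>) \<longlongrightarrow> 0) (at (0::real))"
    by (intro tendsto_eq_intros) auto
  moreover have "(of_real R + of_real S) * ((2 - of_real \<nu>) * (of_real \<nu> + 1)) = (18::complex)"
    "(of_real U - of_real T + of_real R) * (2 - of_real \<nu>) = (6::complex)"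
    "18 * of_real T = (9::complex) - (of_real \<nu> + 1) * of_real R * ((of_real \<nu> - 2) * of_real R + 6)"
    using assms[THEN arg_cong, of complex_of_real] by simp_all
  ultimately have "(\<lambda>\<theta>. AF_charpoly (of_real \<nu>) (of_real R) (of_real S) (of_real T) (of_real U)
            (exp (- \<i> * of_real \<theta>))
            (exp (- \<i> * of_real (\<nu> * \<theta>))
             + (1/540) * \<i> * of_real (\<nu> * (2*\<nu> ^ 4 - 5*\<nu> ^ 3 + 5*\<nu> - 2)) * of_real \<theta> ^ 5))
         \<in> O[at 0](\<lambda>\<theta>. (- \<i> * complex_of_real \<theta>) ^ 6)"
    using AF_charpoly_exp_bigo[of "of_real R" "of_real S" "of_real \<nu>" "of_real U" "of_real T"
        "\<lambda>\<theta>. - \<i> * of_real \<theta>" "at 0"]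
    by (simp add: power_mult_distrib eval_nat_numeral mult_ac)
  moreover have "(- \<i> * complex_of_real \<theta>) ^ 6 = - (complex_of_real \<theta> ^ 6)" for \<theta>
    using power2_i by algebra
  ultimately show ?thesis
    by simp
qed

theorem mainTheorem2:
  fixes \<nu> R S T U :: real and lam :: "real \<Rightarrow> complex"
  assumes "0 < \<nu>" "\<nu> < 1"
    and "R > 0" "S > 0" "T > 0" "U > 0"
    and "S = 18 / (- (\<nu> ^ 2) + \<nu> + 2) - R"
    and "T = (9 - (\<nu> + 1) * R * ((\<nu> - 2) * R + 6)) / 18"
    and "U = (- (\<nu> - 2) * (\<nu> + 1) * R ^ 2 - 6 * (\<nu> + 4) * R + 9 * (\<nu> - 14) / (\<nu> - 2)) / 18"
    and "\<forall>\<^sub>F \<theta> in nhds 0. is_eigenvalue (AF_matrix \<nu> R S T U \<theta>) (lam \<theta>)"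
    and "isCont lam 0"
    and "lam 0 = 1"
  shows "(\<lambda>\<theta>. lam \<theta> - exp (- \<i> * complex_of_real (\<nu> * \<theta>))
            - (1/540) * \<i> * complex_of_real (\<nu> * (2*\<nu> ^ 4 - 5*\<nu> ^ 3 + 5*\<nu> - 2)) * complex_of_real \<theta> ^ 5)
         \<in> O[at (0::real)](\<lambda>\<theta>. complex_of_real \<theta> ^ 6)"
proof -
  define z where "z \<theta> = exp (- \<i> * complex_of_real \<theta>)" for \<theta>
  define E where "E \<theta> = exp (- \<i> * complex_of_real (\<nu> * \<theta>))
    + (1/540) * \<i> * complex_of_real (\<nu> * (2*\<nu> ^ 4 - 5*\<nu> ^ 3 + 5*\<nu> - 2)) * complex_of_real \<theta> ^ 5" for \<theta>
  let ?p = "AF_charpoly (of_real \<nu>) (of_real R) (of_real S) (of_real T) (of_real U)"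
  have "eventually (\<lambda>\<theta>. ?p (z \<theta>) (lam \<theta>) = 0) (at 0)"
    using assms(10) unfolding eventually_at_filter z_def
    by (rule eventually_mono) (blast intro: AF_charpoly_eigenvalue_eq_0)
  moreover have "(\<lambda>\<theta>. ?p (z \<theta>) (E \<theta>)) \<in> O[at 0](\<lambda>\<theta>. complex_of_real \<theta> ^ 6)"
  proof -
    have "\<nu> \<noteq> -1" "\<nu> \<noteq> 2"
      using assms(1,2) by simp_all
    from AF_parameter_conditions[OF this assms(7-9)] show ?thesis
      unfolding z_def E_def by (rule AF_charpoly_exp_i_bigo)
  qed
  moreover have "(z \<longlongrightarrow> 1) (at 0)" "(E \<longlongrightarrow> 1) (at 0)"
  proof -
    have "isCont z 0" "isCont E 0"
      unfolding z_def E_def by (intro continuous_intros)+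
    then show "(z \<longlongrightarrow> 1) (at 0)" "(E \<longlongrightarrow> 1) (at 0)"
      by (simp_all add: isCont_def z_def E_def)
  qed
  moreover have "(lam \<longlongrightarrow> 1) (at 0)"
    using assms(11,12) by (simp add: isCont_def)
  moreover have "complex_of_real \<nu> * (1 - complex_of_real \<nu>) * (complex_of_real R + complex_of_real S) \<noteq> 0"
    using assms(1-4) by (simp flip: of_real_add)
  ultimately have "(\<lambda>\<theta>. E \<theta> - lam \<theta>) \<in> O[at 0](\<lambda>\<theta>. complex_of_real \<theta> ^ 6)"
    by (rule AF_charpoly_root_bigo)
  then have "(\<lambda>\<theta>. - (E \<theta> - lam \<theta>)) \<in> O[at 0](\<lambda>\<theta>. complex_of_real \<theta> ^ 6)"
    by (rule landau_o.big.uminus_in_iff[THEN iffD2])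
  then show ?thesis
    by (simp only: E_def minus_diff_eq diff_diff_eq)
qed

end
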